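(* Let $a:=f'(0)>0$ and let $x^*$ be the smallest positive root of $f$, or $x^*=\infty$ if $f(x)>0$ for all $x>0$. Define, for $x\in(0,x^* )$, $$G(x):=\int_0^x\Big(\frac1{f(u)}-\frac1{au}\Big)du+\frac1a\log x .$$ Then the integral is finite, $G$ is a continuous strictly increasing bijection from $(0,x^* )$ onto $\mathbb R$, and for every $x>0$ the limit $$H(x):=\lim_{t\to\infty}\phi_t\big(xe^{-at}\big)$$ exists, the convergence being uniform over $x$ in compact subsets of $(0,\infty)$, and $$H(x)=G^{-1}\Big(\tfrac1a\log x\Big).$$
   Context: $f:\mathbb R_+\to\mathbb R$ is twice continuously differentiable with bounded second derivative, $f(0)=0$, $a=f'(0)>0$, and $f$ satisfies $(y-x)(f(y)-f(x))\le a(y-x)^2$ for all $x,y\ge0$ (in particular $f(x)\le ax$ for $x\ge 0$). $\phi_t(x)$ denotes the flow of the ODE $\dot x_t=f(x_t)$, i.e. the value at time $t$ of the solution started at $x$. *)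

theory Defs
  imports "HOL-Analysis.Analysis"
begin

definition xstar :: "(real \<Rightarrow> real) \<Rightarrow> ereal" where
  "xstar f = (if \<exists>x>0. f x = 0 then ereal (Inf {x. x > 0 \<and> f x = 0}) else \<infinity>)"

definition Gdom :: "(real \<Rightarrow> real) \<Rightarrow> real set" where
  "Gdom f = {x. 0 < x \<and> ereal x < xstar f}"

definition Gfun :: "(real \<Rightarrow> real) \<Rightarrow> real \<Rightarrow> real \<Rightarrow> real" where
  "Gfun f a x = integral {0..x} (\<lambda>u. 1 / f u - 1 / (a * u)) + ln x / a"

end

theory Submission
  imports Defs "HOL-Real_Asymp.Real_Asymp"
begin

(* Since f u = a u + O(u^2), the integrand 1/f u - 1/(a u) is bounded near 0 and
   G x = ln x / a + O(x).  On (0, x* ) we have G' = 1/f > 0, and G tends to infinity at x*: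
   if x* is infinite because f u <= a u, otherwise because f u <= L (x* - u).  Along the flow G grows at unit speed, so
   G (phi t y) = G y + t and orbits never leave (0, x* ).  For y = x e^(-a t) this gives
   G (phi t y) = ln x / a + (G y - ln y / a), which tends to ln x / a uniformly for x in a
   compact subset of (0, oo); applying the continuous inverse of G proves the claim. *)

lemma quadratic_remainder_bound:
  fixes g g' g'' :: "real \<Rightarrow> real"
  assumes g': "\<And>x. x \<ge> 0 \<Longrightarrow> (g has_real_derivative g' x) (at x within {0..})"
    and g'': "\<And>x. x \<ge> 0 \<Longrightarrow> (g' has_real_derivative g'' x) (at x within {0..})"
    and bound: "\<And>x. x \<ge> 0 \<Longrightarrow> \<bar>g'' x\<bar> \<le> B"
    and u: "u \<ge> 0"
  shows "\<bar>g u - g 0 - g' 0 * u\<bar> \<le> B * u\<^sup>2"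
proof -
  have B: "B \<ge> 0" using bound[of 0] by simp
  have g'_lipschitz: "\<bar>g' v - g' 0\<bar> \<le> B * u" if v: "v \<in> {0..u}" for v
  proof -
    have "norm (g' v - g' 0) \<le> B * norm (v - 0)"
      by (rule field_differentiable_bound[of "{0..u}" _ g''])
        (use v in \<open>auto intro: has_field_derivative_subset[OF g''] bound\<close>)
    also have "\<dots> \<le> B * u" using v B by (auto intro: mult_left_mono)
    finally show ?thesis by simp
  qed
  have "norm ((g u - g' 0 * u) - (g 0 - g' 0 * 0)) \<le> (B * u) * norm (u - 0)"
    by (rule field_differentiable_bound[of "{0..u}" _ "\<lambda>v. g' v - g' 0"])
      (use u g'_lipschitz in \<open>auto intro!: derivative_eq_intros has_field_derivative_subset[OF g']\<close>)
  then show ?thesis using u by (simp add: power2_eq_square algebra_simps)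
qed

lemma increment_le_by_DERIV_le:
  fixes F K :: "real \<Rightarrow> real"
  assumes "p \<le> q"
    and "\<And>v. v \<in> {p..q} \<Longrightarrow> (F has_real_derivative F' v) (at v)"
    and "\<And>v. v \<in> {p..q} \<Longrightarrow> (K has_real_derivative K' v) (at v)"
    and "\<And>v. v \<in> {p..q} \<Longrightarrow> K' v \<le> F' v"
  shows "K q - K p \<le> F q - F p"
  using DERIV_nonneg_imp_nondecreasing[of p q "\<lambda>v. F v - K v"] assms
  by (force intro: DERIV_diff)

lemma eventually_rescaled_in_Ioc:
  fixes a c :: real
  assumes "a > 0" "c > 0" "bounded K" "K \<subseteq> {0<..}"
  shows "\<forall>\<^sub>F t in at_top. \<forall>x\<in>K. x * exp (- a * t) \<in> {0<..c}"
proof -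
  obtain R where "\<forall>x\<in>K. norm x \<le> R"
    using assms(3) unfolding bounded_iff by blast
  then have R: "\<And>x. x \<in> K \<Longrightarrow> x \<le> R" by fastforce
  have "((\<lambda>t. R * exp (- a * t)) \<longlongrightarrow> 0) at_top"
    using assms(1) by real_asymp
  then have "\<forall>\<^sub>F t in at_top. R * exp (- a * t) < c"
    using assms(2) by (rule order_tendstoD)
  then show ?thesis
  proof eventually_elim
    case (elim t)
    show ?case
    proof
      fix x assume x: "x \<in> K"
      have "x * exp (- a * t) \<le> R * exp (- a * t)" using R[OF x] by simp
      then have "x * exp (- a * t) \<le> c" using elim by linarith
      moreover have "x > 0" using x assms(4) by auto
      ultimately show "x * exp (- a * t) \<in> {0<..c}" by simp
    qed
  qed
qed

lemma le_linear_if_one_sided_Lipschitz: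
  fixes f :: "real \<Rightarrow> real"
  assumes "\<And>x y. x \<ge> 0 \<Longrightarrow> y \<ge> 0 \<Longrightarrow> (y - x) * (f y - f x) \<le> a * (y - x)\<^sup>2"
    and "f 0 = 0" "y \<ge> 0"
  shows "f y \<le> a * y"
  using assms(1)[of 0 y] assms(2,3) by (cases "y = 0") (auto simp: power2_eq_square mult.commute)

locale repelling_zero_flow =
  fixes f f' f'' :: "real \<Rightarrow> real" and a :: real and phi :: "real \<Rightarrow> real \<Rightarrow> real"
  assumes d1: "\<And>x. x \<ge> 0 \<Longrightarrow> (f has_real_derivative f' x) (at x within {0..})"
    and d2: "\<And>x. x \<ge> 0 \<Longrightarrow> (f' has_real_derivative f'' x) (at x within {0..})"
    and bdd2: "bounded (f'' ` {0..})"
    and f0: "f 0 = 0"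
    and a_def: "a = f' 0"
    and a_pos: "a > 0"
    and f_le_linear: "\<And>y. y \<ge> 0 \<Longrightarrow> f y \<le> a * y"
    and flow0: "\<And>x. x \<ge> 0 \<Longrightarrow> phi 0 x = x"
    and flow: "\<And>x t. x \<ge> 0 \<Longrightarrow> t \<ge> 0 \<Longrightarrow>
                 ((\<lambda>s. phi s x) has_real_derivative f (phi t x)) (at t within {0..})"
begin

lemma continuous_on_f: "continuous_on {0..} f"
  by (rule DERIV_continuous_on[where D=f']) (use d1 in auto)

lemma f_quadratic_bound:
  obtains B where "B > 0" "\<And>u. u \<ge> 0 \<Longrightarrow> \<bar>f u - a * u\<bar> \<le> B * u\<^sup>2"
proof -
  obtain B where B: "B > 0" "\<And>x. x \<ge> 0 \<Longrightarrow> \<bar>f'' x\<bar> \<le> B"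
    using bdd2 unfolding bounded_pos by force
  show ?thesis
    using that[OF B(1)] quadratic_remainder_bound[OF d1 d2 B(2)] f0 a_def
    by (simp add: mult.commute)
qed

lemma integrand_bounded_near_zero:
  obtains c M where "c > 0"
    "\<And>u. u \<in> {0<..c} \<Longrightarrow> f u > 0"
    "\<And>u. u \<in> {0..c} \<Longrightarrow> \<bar>1 / f u - 1 / (a * u)\<bar> \<le> M"
proof -
  obtain B where B: "B > 0" "\<And>u. u \<ge> 0 \<Longrightarrow> \<bar>f u - a * u\<bar> \<le> B * u\<^sup>2"
    using f_quadratic_bound by blast
  define c where "c = a / (2 * B)"
  have f_half: "f u \<ge> a * u / 2" if u: "u \<in> {0..c}" for u
  proof -
    have "B * u \<le> a / 2" using u B(1) by (auto simp: c_def field_simps)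
    then have "B * u * u \<le> a / 2 * u" by (rule mult_right_mono) (use u in auto)
    then show ?thesis using B(2)[of u] u by (simp add: power2_eq_square abs_le_iff)
  qed
  have "\<bar>1 / f u - 1 / (a * u)\<bar> \<le> 2 * B / a\<^sup>2" if u: "u \<in> {0..c}" for u
  proof (cases "u = 0")
    case True then show ?thesis using f0 B(1) by simp
  next
    case False
    then have u0: "u > 0" using u by simp
    have fu_ge: "f u \<ge> a * u / 2" using f_half[OF u] .
    have "a * u / 2 > 0" using u0 a_pos by simp
    then have fu: "f u > 0" using fu_ge by linarith
    have "\<bar>1 / f u - 1 / (a * u)\<bar> = \<bar>f u - a * u\<bar> / (a * u * f u)"
      using fu u0 a_pos by (simp add: field_simps abs_divide abs_minus_commute)
    also have "\<dots> \<le> B * u\<^sup>2 / (a * u * (a * u / 2))"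
    proof (rule frac_le)
      show "\<bar>f u - a * u\<bar> \<le> B * u\<^sup>2" using B(2) u0 by simp
      show "a * u * (a * u / 2) \<le> a * u * f u" using fu_ge u0 a_pos by simp
    qed (use B(1) u0 a_pos in auto)
    also have "\<dots> = 2 * B / a\<^sup>2" using u0 a_pos by (simp add: power2_eq_square)
    finally show ?thesis .
  qed
  moreover have "f u > 0" if u: "u \<in> {0<..c}" for u
  proof -
    have "a * u / 2 > 0" using u a_pos by simp
    then show ?thesis using f_half[of u] u by simp
  qed
  moreover have "c > 0" using B(1) a_pos by (simp add: c_def)
  ultimately show ?thesis using that by blast
qed

lemma f_pos_if_no_root_below:
  assumes x: "0 < x" and no_root: "\<And>z. 0 < z \<Longrightarrow> z \<le> x \<Longrightarrow> f z \<noteq> 0"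
  shows "f x > 0"
proof -
  obtain c M where c: "c > 0" "\<And>u. u \<in> {0<..c} \<Longrightarrow> f u > 0"
    and "\<And>u. u \<in> {0..c} \<Longrightarrow> \<bar>1 / f u - 1 / (a * u)\<bar> \<le> M"
    using integrand_bounded_near_zero by blast
  show ?thesis
  proof (cases "x \<le> c")
    case True then show ?thesis using c(2) x by simp
  next
    case False
    show ?thesis
    proof (rule ccontr)
      assume "\<not> f x > 0"
      moreover have "f c > 0" using c by simp
      moreover have "continuous_on {c..x} f"
        using continuous_on_subset[OF continuous_on_f] c(1) by auto
      ultimately obtain z where "c \<le> z" "z \<le> x" "f z = 0"
        using IVT2'[of f x 0 c] False by auto
      then show False using no_root[of z] c(1) by simp
    qed
  qed
qed

lemma least_positive_root:
  assumes "\<exists>x>0. f x = 0"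
  shows "Inf {x. x > 0 \<and> f x = 0} > 0" "f (Inf {x. x > 0 \<and> f x = 0}) = 0"
proof -
  define S where "S = {x. x > 0 \<and> f x = 0}"
  obtain c M where c: "c > 0" "\<And>u. u \<in> {0<..c} \<Longrightarrow> f u > 0"
    and "\<And>u. u \<in> {0..c} \<Longrightarrow> \<bar>1 / f u - 1 / (a * u)\<bar> \<le> M"
    using integrand_bounded_near_zero by blast
  have "S = {c..} \<inter> f -` {0}"
    using c by (force simp: S_def)
  then have "closed S"
    using continuous_closed_preimage[of "{c..}" f "{0}"] continuous_on_subset[OF continuous_on_f] c(1)
    by auto
  moreover have "S \<noteq> {}" "bdd_below S"
    using assms by (auto simp: S_def intro: bdd_belowI[of _ 0])
  ultimately have "Inf S \<in> S" using closed_contains_Inf by blast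
  then show "Inf S > 0" "f (Inf S) = 0" by (auto simp: S_def)
qed

lemma Gdom_iff: "x \<in> Gdom f \<longleftrightarrow> 0 < x \<and> (\<forall>z\<in>{0<..x}. f z \<noteq> 0)"
proof (cases "\<exists>x>0. f x = 0")
  case False
  then show ?thesis by (auto simp: Gdom_def xstar_def)
next
  case True
  define r where "r = Inf {x. x > 0 \<and> f x = 0}"
  have Gdom: "Gdom f = {0<..<r}" using True by (auto simp: Gdom_def xstar_def r_def)
  have r_le: "r \<le> z" if "0 < z" "f z = 0" for z
    unfolding r_def using that by (intro cInf_lower bdd_belowI[of _ 0]) auto
  have r: "r > 0" "f r = 0" using least_positive_root[OF True] by (simp_all add: r_def)
  show ?thesis
  proof
    assume "x \<in> Gdom f"
    then show "0 < x \<and> (\<forall>z\<in>{0<..x}. f z \<noteq> 0)" using r_le unfolding Gdom by force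
  next
    assume x: "0 < x \<and> (\<forall>z\<in>{0<..x}. f z \<noteq> 0)"
    then have "x < r" using r by (meson greaterThanAtMost_iff not_le)
    then show "x \<in> Gdom f" using x unfolding Gdom by simp
  qed
qed

lemma Gdom_cases:
  obtains "Gdom f = {0<..}" | r where "r > 0" "f r = 0" "Gdom f = {0<..<r}"
proof (cases "\<exists>x>0. f x = 0")
  case False
  then have "Gdom f = {0<..}" by (auto simp: Gdom_def xstar_def)
  then show ?thesis by (rule that(1))
next
  case True
  then have "Gdom f = {0<..<Inf {x. x > 0 \<and> f x = 0}}" by (auto simp: Gdom_def xstar_def)
  then show ?thesis using that(2) least_positive_root[OF True] by blast
qed

lemma Gdom_pos: "x \<in> Gdom f \<Longrightarrow> x > 0"
  by (simp add: Gdom_def)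

lemma f_pos_Gdom: "x \<in> Gdom f \<Longrightarrow> f x > 0"
  by (rule f_pos_if_no_root_below) (auto simp: Gdom_iff)

lemma Gdom_downward: "y \<in> Gdom f \<Longrightarrow> 0 < v \<Longrightarrow> v \<le> y \<Longrightarrow> v \<in> Gdom f"
  by (auto simp: Gdom_iff)

lemma atLeastAtMost_subset_Gdom:
  assumes "x \<in> Gdom f" "y \<in> Gdom f"
  shows "{x..y} \<subseteq> Gdom f"
proof
  fix v assume v: "v \<in> {x..y}"
  then have "0 < v" using Gdom_pos[OF assms(1)] by simp
  then show "v \<in> Gdom f" using Gdom_downward[OF assms(2)] v by simp
qed

lemma open_Gdom: "open (Gdom f)"
  by (cases rule: Gdom_cases) auto

lemma continuous_on_integrand: "continuous_on (Gdom f) (\<lambda>u. 1 / f u - 1 / (a * u))"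
proof -
  have "continuous_on (Gdom f) f"
    by (rule continuous_on_subset[OF continuous_on_f]) (auto dest: Gdom_pos)
  moreover have "\<And>u. u \<in> Gdom f \<Longrightarrow> f u \<noteq> 0" "\<And>u. u \<in> Gdom f \<Longrightarrow> a * u \<noteq> 0"
    using f_pos_Gdom Gdom_pos a_pos by force+
  ultimately show ?thesis
    by (intro continuous_on_diff continuous_on_divide continuous_on_const continuous_on_mult continuous_on_id) auto
qed

lemma integrand_absolutely_integrable:
  assumes x: "x \<in> Gdom f"
  shows "(\<lambda>u. 1 / f u - 1 / (a * u)) absolutely_integrable_on {0..x}"
proof -
  let ?h = "\<lambda>u. 1 / f u - 1 / (a * u)"
  obtain c M where c: "c > 0" "\<And>u. u \<in> {0<..c} \<Longrightarrow> f u > 0"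
    and M: "\<And>u. u \<in> {0..c} \<Longrightarrow> \<bar>?h u\<bar> \<le> M"
    using integrand_bounded_near_zero by blast
  define c' where "c' = min c x"
  have c': "0 < c'" "c' \<le> c" "c' \<le> x" using c Gdom_pos[OF x] by (auto simp: c'_def)
  have "{c'..x} \<subseteq> Gdom f" using Gdom_downward[OF x] c' by auto
  then have "compact (?h ` {c'..x})"
    by (intro compact_continuous_image continuous_on_subset[OF continuous_on_integrand]) auto
  then obtain M' where M': "\<forall>u\<in>{c'..x}. norm (?h u) \<le> M'"
    unfolding compact_eq_bounded_closed bounded_iff by auto
  have bound: "norm (?h u) \<le> max M M'" if "u \<in> {0<..x}" for u
  proof (cases "u \<le> c'")
    case True then show ?thesis using M[of u] that c' by simp
  next
    case False
    then have "u \<in> {c'..x}" using that by simp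
    then show ?thesis using M' by force
  qed
  have "{0<..x} \<subseteq> Gdom f" using Gdom_downward[OF x] by auto
  then have "?h \<in> borel_measurable (lebesgue_on {0<..x})"
    by (intro continuous_imp_measurable_on_sets_lebesgue continuous_on_subset[OF continuous_on_integrand]) auto
  moreover have "(\<lambda>_. max M M') integrable_on {0<..x}"
    by (rule integrable_spike_set[where S="{0..x}"]) (auto intro: negligible_subset[of "{0}"])
  ultimately have "?h absolutely_integrable_on {0<..x}"
    using bound by (intro measurable_bounded_by_integrable_imp_absolutely_integrable) auto
  then show ?thesis
    by (subst absolutely_integrable_spike_set_eq[where T="{0<..x}"])
      (auto intro: negligible_subset[of "{0}"])
qed

lemma Gfun_has_real_derivative:
  assumes x: "x \<in> Gdom f"
  shows "(Gfun f a has_real_derivative 1 / f x) (at x)"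
proof -
  let ?h = "\<lambda>u. 1 / f u - 1 / (a * u)"
  obtain e where e: "e > 0" "ball x e \<subseteq> Gdom f" using open_Gdom x openE by metis
  define d where "d = x + e / 2"
  have d: "d \<in> Gdom f" "x < d" using e by (auto simp: d_def dist_real_def intro!: subsetD[OF e(2)])
  have x0: "x > 0" using Gdom_pos[OF x] .
  have "isCont ?h x"
    using continuous_on_integrand open_Gdom x continuous_on_eq_continuous_at by blast
  then have "continuous (at x within {0..d} - {}) ?h"
    by (rule continuous_at_imp_continuous_within)
  moreover have "?h integrable_on {0..d}"
    using integrand_absolutely_integrable[OF d(1)] by (simp add: absolutely_integrable_on_def)
  ultimately have "((\<lambda>u. integral {0..u} ?h) has_vector_derivative ?h x) (at x within {0..d} - {})"
    using x0 d(2) by (intro integral_has_vector_derivative_continuous_at) auto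
  moreover have "at x within {0..d} - {} = at x"
    using x0 d(2) by (intro at_within_interior) auto
  ultimately have "((\<lambda>u. integral {0..u} ?h) has_real_derivative ?h x) (at x)"
    by (simp add: has_real_derivative_iff_has_vector_derivative)
  moreover have "((\<lambda>u. ln u / a) has_real_derivative 1 / x / a) (at x)"
    using x0 a_pos by (auto intro!: derivative_eq_intros)
  ultimately have "(Gfun f a has_real_derivative ?h x + 1 / x / a) (at x)"
    unfolding Gfun_def[abs_def] by (rule DERIV_add)
  moreover have "?h x + 1 / x / a = 1 / f x"
    using x0 a_pos f_pos_Gdom[OF x] by (simp add: field_simps)
  ultimately show ?thesis by simp
qed

lemma continuous_on_Gfun: "continuous_on (Gdom f) (Gfun f a)"
  using Gfun_has_real_derivative by (intro DERIV_continuous_on) (blast intro: has_field_derivative_at_within)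

lemma strict_mono_on_Gfun: "strict_mono_on (Gdom f) (Gfun f a)"
proof (rule strict_mono_onI)
  fix x y assume xy: "x \<in> Gdom f" "y \<in> Gdom f" "x < y"
  show "Gfun f a x < Gfun f a y"
  proof (rule DERIV_pos_imp_increasing[OF xy(3)])
    fix v assume "x \<le> v" "v \<le> y"
    then have v: "v \<in> Gdom f" using atLeastAtMost_subset_Gdom[OF xy(1,2)] by auto
    show "\<exists>D. (Gfun f a has_real_derivative D) (at v) \<and> D > 0"
      using Gfun_has_real_derivative[OF v] f_pos_Gdom[OF v] by force
  qed
qed

lemma Gfun_near_zero:
  obtains c M where "c > 0" "{0<..c} \<subseteq> Gdom f" "M \<ge> 0"
    "\<And>x. x \<in> {0<..c} \<Longrightarrow> \<bar>Gfun f a x - ln x / a\<bar> \<le> M * x"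
proof -
  let ?h = "\<lambda>u. 1 / f u - 1 / (a * u)"
  obtain c M where c: "c > 0" "\<And>u. u \<in> {0<..c} \<Longrightarrow> f u > 0"
    and M: "\<And>u. u \<in> {0..c} \<Longrightarrow> \<bar>?h u\<bar> \<le> M"
    using integrand_bounded_near_zero by blast
  have M0: "M \<ge> 0" using M[of 0] c(1) f0 by simp
  have sub: "{0<..c} \<subseteq> Gdom f"
    using c(2) by (force simp: Gdom_iff)
  have "\<bar>Gfun f a x - ln x / a\<bar> \<le> M * x" if x: "x \<in> {0<..c}" for x
  proof -
    have "norm (integral {0..x} ?h) \<le> integral {0..x} (\<lambda>_. M)"
    proof (rule integral_norm_bound_integral)
      show "?h integrable_on {0..x}"
        using integrand_absolutely_integrable[of x] sub x by (auto simp: absolutely_integrable_on_def)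
    qed (use M x in auto)
    also have "\<dots> = M * x" using x by simp
    finally show ?thesis by (simp add: Gfun_def)
  qed
  then show ?thesis using that c(1) sub M0 by blast
qed

lemma Gfun_unbounded_below: "\<exists>x\<in>Gdom f. Gfun f a x \<le> Y"
proof -
  obtain c M where c: "c > 0" "{0<..c} \<subseteq> Gdom f" and M: "M \<ge> 0"
    "\<And>x. x \<in> {0<..c} \<Longrightarrow> \<bar>Gfun f a x - ln x / a\<bar> \<le> M * x"
    using Gfun_near_zero by blast
  define x where "x = min c (exp (a * (Y - M * c)))"
  have x: "x \<in> {0<..c}" using c by (simp add: x_def)
  have "ln x \<le> a * (Y - M * c)"
    using ln_mono[of x "exp (a * (Y - M * c))"] x by (simp add: x_def)
  then have "ln x / a \<le> Y - M * c" using a_pos by (simp add: field_simps)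
  moreover have "M * x \<le> M * c" using x M(1) by (simp add: mult_left_mono)
  ultimately have "Gfun f a x \<le> Y" using M(2)[OF x] by linarith
  then show ?thesis using x c(2) by blast
qed

lemma Gfun_unbounded_above_by_comparison:
  assumes c: "c \<in> Gdom f"
    and K': "\<And>v. v \<in> Gdom f \<Longrightarrow> c \<le> v \<Longrightarrow> (K has_real_derivative K' v) (at v)"
    and K'_le: "\<And>v. v \<in> Gdom f \<Longrightarrow> c \<le> v \<Longrightarrow> K' v \<le> 1 / f v"
    and K_unbounded: "\<And>Z. \<exists>x\<in>Gdom f. c \<le> x \<and> Z \<le> K x"
  shows "\<exists>x\<in>Gdom f. Y \<le> Gfun f a x"
proof -
  obtain x where x: "x \<in> Gdom f" "c \<le> x" "Y + K c - Gfun f a c \<le> K x"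
    using K_unbounded by blast
  have "K x - K c \<le> Gfun f a x - Gfun f a c"
  proof (rule increment_le_by_DERIV_le[OF x(2)])
    fix v assume "v \<in> {c..x}"
    then have v: "v \<in> Gdom f" "c \<le> v" using atLeastAtMost_subset_Gdom[OF c x(1)] by auto
    show "(Gfun f a has_real_derivative 1 / f v) (at v)" by (rule Gfun_has_real_derivative[OF v(1)])
    show "(K has_real_derivative K' v) (at v)" by (rule K'[OF v])
    show "K' v \<le> 1 / f v" by (rule K'_le[OF v])
  qed
  then show ?thesis using x by (intro bexI[of _ x]) auto
qed

lemma Gfun_unbounded_above_no_root:
  assumes Gdom: "Gdom f = {0<..}"
  shows "\<exists>x\<in>Gdom f. Y \<le> Gfun f a x"
proof (rule Gfun_unbounded_above_by_comparison[where K="\<lambda>v. ln v / a" and K'="\<lambda>v. 1 / (a * v)"])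
  show "1 \<in> Gdom f" using Gdom by simp
  fix v assume v: "v \<in> Gdom f" "1 \<le> v"
  have "v > 0" using v by simp
  show "((\<lambda>v. ln v / a) has_real_derivative 1 / (a * v)) (at v)"
    using a_pos \<open>v > 0\<close> by (auto intro!: derivative_eq_intros simp: field_simps)
  show "1 / (a * v) \<le> 1 / f v"
    using f_pos_Gdom[OF v(1)] f_le_linear[of v] v by (intro frac_le) auto
next
  fix Z
  define x where "x = max 1 (exp (a * Z))"
  have "a * Z \<le> ln x" unfolding x_def
    by (metis exp_le_cancel_iff exp_ln max.cobounded2 max.strict_coboundedI1 zero_less_one)
  then have "Z \<le> ln x / a" using a_pos by (simp add: field_simps)
  then show "\<exists>x\<in>Gdom f. 1 \<le> x \<and> Z \<le> ln x / a" using Gdom by (intro bexI[of _ x]) (auto simp: x_def)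
qed

lemma Gfun_unbounded_above_before_root:
  assumes r: "r > 0" "f r = 0" and Gdom: "Gdom f = {0<..<r}"
  shows "\<exists>x\<in>Gdom f. Y \<le> Gfun f a x"
proof -
  have "continuous_on {0..r} f'"
    by (intro DERIV_continuous_on[where D=f'']) (auto intro: has_field_derivative_subset[OF d2])
  then have "compact (f' ` {0..r})" by (intro compact_continuous_image) auto
  then obtain L where L: "L > 0" "\<And>v. v \<in> {0..r} \<Longrightarrow> norm (f' v) \<le> L"
    unfolding compact_eq_bounded_closed bounded_pos by auto
  have f_le: "f v \<le> L * (r - v)" if v: "v \<in> {0..r}" for v
  proof -
    have "norm (f v - f r) \<le> L * norm (v - r)"
    proof (rule field_differentiable_bound[of "{0..r}" f f'])
      fix z assume z: "z \<in> {0..r}"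
      then show "(f has_field_derivative f' z) (at z within {0..r})"
        by (intro has_field_derivative_subset[OF d1]) auto
      show "norm (f' z) \<le> L" using L(2)[OF z] .
    qed (use v r(1) in auto)
    then show ?thesis using v r(2) by simp
  qed
  show ?thesis
  proof (rule Gfun_unbounded_above_by_comparison[where K="\<lambda>v. - ln (r - v) / L"
        and K'="\<lambda>v. 1 / (L * (r - v))"])
    show "r / 2 \<in> Gdom f" using Gdom r by simp
    fix v assume v: "v \<in> Gdom f" "r / 2 \<le> v"
    then have "v < r" "v > 0" using Gdom by auto
    then show "((\<lambda>v. - ln (r - v) / L) has_real_derivative 1 / (L * (r - v))) (at v)"
      using L(1) by (auto intro!: derivative_eq_intros simp: field_simps)
    show "1 / (L * (r - v)) \<le> 1 / f v"
      using f_pos_Gdom[OF v(1)] f_le[of v] \<open>v < r\<close> \<open>v > 0\<close> by (intro frac_le) auto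
  next
    fix Z
    define e where "e = min (r / 2) (exp (- L * Z))"
    have e: "0 < e" "e \<le> r / 2" using r(1) by (auto simp: e_def)
    have "ln e \<le> - L * Z"
      by (metis e(1) e_def ln_exp ln_le_cancel_iff exp_gt_zero min.cobounded2)
    then have "Z \<le> - ln (r - (r - e)) / L" using e(1) L(1) by (simp add: field_simps)
    moreover have "r - e \<in> Gdom f" "r / 2 \<le> r - e" using e Gdom by auto
    ultimately show "\<exists>x\<in>Gdom f. r / 2 \<le> x \<and> Z \<le> - ln (r - x) / L" by blast
  qed
qed

lemma bij_betw_Gfun: "bij_betw (Gfun f a) (Gdom f) UNIV"
proof -
  have "Y \<in> Gfun f a ` Gdom f" for Y
  proof -
    obtain x1 where x1: "x1 \<in> Gdom f" "Gfun f a x1 \<le> Y"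
      using Gfun_unbounded_below by blast
    obtain x2 where x2: "x2 \<in> Gdom f" "Y \<le> Gfun f a x2"
      by (cases rule: Gdom_cases)
        (use Gfun_unbounded_above_no_root Gfun_unbounded_above_before_root in blast)+
    have "\<not> x2 < x1"
      using strict_mono_onD[OF strict_mono_on_Gfun x2(1) x1(1)] x1 x2 by linarith
    then obtain z where "x1 \<le> z" "z \<le> x2" "Gfun f a z = Y"
      using IVT'[of "Gfun f a" x1 Y x2] x1 x2
        continuous_on_subset[OF continuous_on_Gfun atLeastAtMost_subset_Gdom[OF x1(1) x2(1)]]
      by auto
    then show ?thesis using atLeastAtMost_subset_Gdom[OF x1(1) x2(1)] by force
  qed
  then show ?thesis
    using strict_mono_on_imp_inj_on[OF strict_mono_on_Gfun] by (auto simp: bij_betw_def)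
qed

abbreviation Ginv :: "real \<Rightarrow> real" where
  "Ginv \<equiv> inv_into (Gdom f) (Gfun f a)"

lemma Ginv_in_Gdom: "Ginv y \<in> Gdom f"
  using bij_betw_Gfun by (simp add: bij_betw_def inv_into_into)

lemma Gfun_Ginv: "Gfun f a (Ginv y) = y"
  using bij_betw_inv_into_right[OF bij_betw_Gfun] by simp

lemma Ginv_Gfun: "x \<in> Gdom f \<Longrightarrow> Ginv (Gfun f a x) = x"
  using bij_betw_inv_into_left[OF bij_betw_Gfun] .

lemma continuous_on_Ginv: "continuous_on UNIV Ginv"
proof -
  have "isCont Ginv (Gfun f a x)" if x: "x \<in> Gdom f" for x
  proof -
    have "(Gfun f a has_derivative (*) (1 / f x)) (at x)"
      using Gfun_has_real_derivative[OF x] by (simp add: has_field_derivative_def)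
    then have "(Ginv has_derivative (*) (f x)) (at (Gfun f a x))"
      using f_pos_Gdom[OF x]
      by (intro has_derivative_inverse_strong[OF open_Gdom x continuous_on_Gfun Ginv_Gfun]) auto
    then show ?thesis by (rule has_derivative_continuous)
  qed
  then show ?thesis
    using Ginv_in_Gdom Gfun_Ginv by (intro continuous_at_imp_continuous_on) metis
qed

lemma Gfun_flow_while_in_Gdom:
  assumes y: "y \<in> Gdom f" and T: "T \<ge> 0"
    and stays: "\<And>s. s \<in> {0..T} \<Longrightarrow> phi s y \<in> Gdom f"
  shows "Gfun f a (phi T y) = Gfun f a y + T"
proof -
  have "((\<lambda>s. Gfun f a (phi s y) - s) has_real_derivative 0) (at s within {0..T})"
    if s: "s \<in> {0..T}" for s
  proof -
    have "((\<lambda>s. phi s y) has_real_derivative f (phi s y)) (at s within {0..T})"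
      using s Gdom_pos[OF y] by (intro has_field_derivative_subset[OF flow]) auto
    then have "((\<lambda>s. Gfun f a (phi s y)) has_real_derivative 1 / f (phi s y) * f (phi s y))
        (at s within {0..T})"
      by (rule DERIV_chain2[where f="Gfun f a" and g="\<lambda>s. phi s y",
            OF Gfun_has_real_derivative[OF stays[OF s]]])
    then show ?thesis
      using f_pos_Gdom[OF stays[OF s]] by (auto intro!: derivative_eq_intros)
  qed
  then obtain k where k: "\<forall>s\<in>{0..T}. Gfun f a (phi s y) - s = k"
    using has_field_derivative_zero_constant[OF convex_real_interval(5)] by blast
  have "phi 0 y = y" using flow0 Gdom_pos[OF y] by simp
  then show ?thesis using k T by (metis atLeastAtMost_iff diff_zero eq_diff_eq order_refl)
qed

(* At a first exit time T the orbit would, by continuity, equal Ginv (G y + T), a point of Gdom f. *)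

lemma flow_in_Gdom:
  assumes y: "y \<in> Gdom f" and t: "t \<ge> 0"
  shows "phi t y \<in> Gdom f"
proof (rule ccontr)
  assume "phi t y \<notin> Gdom f"
  have cont_orbit: "continuous_on {0..} (\<lambda>s. phi s y)"
    using flow Gdom_pos[OF y] by (intro DERIV_continuous_on[where D="\<lambda>s. f (phi s y)"]) auto
  define E where "E = {0..} \<inter> (\<lambda>s. phi s y) -` (- Gdom f)"
  have "closed E"
    unfolding E_def using open_Gdom by (intro continuous_closed_preimage[OF cont_orbit]) auto
  moreover have "E \<noteq> {}" using \<open>phi t y \<notin> Gdom f\<close> t by (auto simp: E_def)
  moreover have E_bdd: "bdd_below E" by (auto simp: E_def intro: bdd_belowI[of _ 0])
  ultimately have "Inf E \<in> E" by (rule closed_contains_Inf[rotated 2])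
  define T where "T = Inf E"
  have T: "T \<ge> 0" "phi T y \<notin> Gdom f" using \<open>Inf E \<in> E\<close> by (auto simp: T_def E_def)
  have before: "phi s y \<in> Gdom f" if s: "0 \<le> s" "s < T" for s
  proof (rule ccontr)
    assume "phi s y \<notin> Gdom f"
    then have "s \<in> E" using s by (simp add: E_def)
    then have "T \<le> s" unfolding T_def using E_bdd by (rule cInf_lower)
    then show False using s by simp
  qed
  have "phi 0 y \<in> Gdom f" using flow0 y Gdom_pos[OF y] by simp
  then have "T > 0" using T by (cases "T = 0") auto
  let ?C = "{s \<in> {0..T}. phi s y - Ginv (Gfun f a y + s) = 0}"
  have "continuous_on {0..T} (\<lambda>s. phi s y)"
    by (rule continuous_on_subset[OF cont_orbit]) auto
  moreover have "continuous_on {0..T} (\<lambda>s. Ginv (Gfun f a y + s))"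
    by (rule continuous_on_compose2[OF continuous_on_Ginv]) (auto intro!: continuous_intros)
  ultimately have "closed ?C"
    by (intro continuous_closed_preimage_constant continuous_on_diff) auto
  moreover have "{0..<T} \<subseteq> ?C"
  proof
    fix s assume s: "s \<in> {0..<T}"
    have "Gfun f a (phi s y) = Gfun f a y + s"
      using s before by (intro Gfun_flow_while_in_Gdom[OF y]) auto
    then show "s \<in> ?C" using s Ginv_Gfun[OF before[of s]] by auto
  qed
  ultimately have "closure {0..<T} \<subseteq> ?C" by (rule closure_minimal[rotated])
  moreover have "T \<in> closure {0..<T}" using \<open>T > 0\<close> by simp
  ultimately have "phi T y = Ginv (Gfun f a y + T)" by auto
  then show False using T(2) Ginv_in_Gdom by simp
qed

lemma Gfun_flow: "y \<in> Gdom f \<Longrightarrow> t \<ge> 0 \<Longrightarrow> Gfun f a (phi t y) = Gfun f a y + t"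
  by (rule Gfun_flow_while_in_Gdom) (auto intro: flow_in_Gdom)

lemma uniform_limit_Gfun_flow:
  assumes K: "compact K" "K \<subseteq> {0<..}"
  shows "uniform_limit K (\<lambda>t x. Gfun f a (phi t (x * exp (- a * t)))) (\<lambda>x. ln x / a) at_top"
  unfolding uniform_limit_iff
proof (intro allI impI)
  fix e :: real assume e: "e > 0"
  obtain c M where c: "c > 0" "{0<..c} \<subseteq> Gdom f" and M: "M \<ge> 0"
    "\<And>x. x \<in> {0<..c} \<Longrightarrow> \<bar>Gfun f a x - ln x / a\<bar> \<le> M * x"
    using Gfun_near_zero by blast
  define \<delta> where "\<delta> = min c (e / (M + 1))"
  have "\<delta> > 0" using c e M by (simp add: \<delta>_def)
  then have "\<forall>\<^sub>F t in at_top. \<forall>x\<in>K. x * exp (- a * t) \<in> {0<..\<delta>}"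
    by (rule eventually_rescaled_in_Ioc[OF a_pos _ compact_imp_bounded[OF K(1)] K(2)])
  then show "\<forall>\<^sub>F t in at_top. \<forall>x\<in>K.
      dist (Gfun f a (phi t (x * exp (- a * t)))) (ln x / a) < e"
    using eventually_ge_at_top[of 0]
  proof eventually_elim
    case (elim t)
    show ?case
    proof
      fix x assume x: "x \<in> K"
      define y where "y = x * exp (- a * t)"
      have "y \<in> {0<..\<delta>}" using elim(1) x unfolding y_def by blast
      then have y: "y \<in> {0<..c}" "y \<le> e / (M + 1)" by (auto simp: \<delta>_def)
      have "x > 0" using x K(2) by auto
      then have "ln y / a = ln x / a - t"
        using a_pos by (simp add: y_def ln_mult field_simps)
      moreover have "Gfun f a (phi t y) = Gfun f a y + t"
        using y(1) c(2) elim(2) by (intro Gfun_flow) auto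
      ultimately have "dist (Gfun f a (phi t y)) (ln x / a) = \<bar>Gfun f a y - ln y / a\<bar>"
        by (simp add: dist_real_def)
      also have "\<dots> \<le> M * y" by (rule M(2)[OF y(1)])
      also have "\<dots> \<le> M * (e / (M + 1))" using y(2) M(1) by (rule mult_left_mono)
      also have "\<dots> < e" using e M(1) by (simp add: field_simps)
      finally show "dist (Gfun f a (phi t (x * exp (- a * t)))) (ln x / a) < e"
        by (simp add: y_def)
    qed
  qed
qed

lemma uniform_limit_flow:
  assumes K: "compact K" "K \<subseteq> {0<..}"
  shows "uniform_limit K (\<lambda>t x. phi t (x * exp (- a * t))) (\<lambda>x. Ginv (ln x / a)) at_top"
proof -
  let ?L = "\<lambda>x. ln x / a" and ?F = "\<lambda>t x. Gfun f a (phi t (x * exp (- a * t)))"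
  have lim: "uniform_limit K ?F ?L at_top" by (rule uniform_limit_Gfun_flow[OF K])
  have "compact (?L ` K)"
    using K a_pos by (intro compact_continuous_image continuous_intros) auto
  then obtain b where b: "\<And>x. x \<in> K \<Longrightarrow> \<bar>?L x\<bar> \<le> b"
    unfolding compact_eq_bounded_closed bounded_iff by auto
  have "\<forall>\<^sub>F t in at_top. \<forall>x\<in>K. dist (?F t x) (?L x) < 1"
    using uniform_limitD[OF lim, of 1] by simp
  then have in_S: "\<forall>\<^sub>F t in at_top. \<forall>x\<in>K. ?F t x \<in> {- b - 1..b + 1}"
  proof (rule eventually_mono)
    fix t assume close: "\<forall>x\<in>K. dist (?F t x) (?L x) < 1"
    show "\<forall>x\<in>K. ?F t x \<in> {- b - 1..b + 1}"
    proof
      fix x assume x: "x \<in> K"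
      have "\<bar>?F t x - ?L x\<bar> < 1" using close x by (simp add: dist_real_def)
      then show "?F t x \<in> {- b - 1..b + 1}"
        using b[OF x] unfolding atLeastAtMost_iff by arith
    qed
  qed
  have "uniformly_continuous_on {- b - 1..b + 1} Ginv"
    using continuous_on_subset[OF continuous_on_Ginv] by (intro compact_uniformly_continuous) auto
  then have "uniform_limit K (\<lambda>t x. Ginv (?F t x)) (\<lambda>x. Ginv (?L x)) at_top"
    by (rule uniform_limit_compose_uniformly_continuous_on[OF lim _ in_S closed_atLeastAtMost])
  moreover have ev: "\<forall>\<^sub>F t in at_top. \<forall>x\<in>K. Ginv (?F t x) = phi t (x * exp (- a * t))"
  proof -
    obtain c M where c: "c > 0" "{0<..c} \<subseteq> Gdom f" and "M \<ge> 0"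
      "\<And>x. x \<in> {0<..c} \<Longrightarrow> \<bar>Gfun f a x - ln x / a\<bar> \<le> M * x"
      using Gfun_near_zero by blast
    have "\<forall>\<^sub>F t in at_top. \<forall>x\<in>K. x * exp (- a * t) \<in> Gdom f"
      by (rule eventually_mono[OF eventually_rescaled_in_Ioc[OF a_pos c(1)
            compact_imp_bounded[OF K(1)] K(2)]]) (use c(2) in blast)
    then show ?thesis
      using eventually_ge_at_top[of 0]
    proof eventually_elim
      case (elim t)
      show ?case
      proof
        fix x assume "x \<in> K"
        then have "x * exp (- a * t) \<in> Gdom f" using elim(1) by blast
        then show "Ginv (?F t x) = phi t (x * exp (- a * t))"
          using Ginv_Gfun[OF flow_in_Gdom[OF _ elim(2)]] by blast
      qed
    qed
  qed
  moreover have "uniform_limit K (\<lambda>t x. Ginv (?F t x)) (\<lambda>x. Ginv (?L x)) at_top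
      = uniform_limit K (\<lambda>t x. phi t (x * exp (- a * t))) (\<lambda>x. Ginv (?L x)) at_top"
    by (rule uniform_limit_cong[OF ev]) (rule refl)
  ultimately show ?thesis by simp
qed

end

theorem proposition1:
  fixes f f' f'' :: "real \<Rightarrow> real" and a :: real and phi :: "real \<Rightarrow> real \<Rightarrow> real"
  assumes d1: "\<And>x. x \<ge> 0 \<Longrightarrow> (f has_real_derivative f' x) (at x within {0..})"
    and d2: "\<And>x. x \<ge> 0 \<Longrightarrow> (f' has_real_derivative f'' x) (at x within {0..})"
    and c2: "continuous_on {0..} f''"
    and bdd2: "bounded (f'' ` {0..})"
    and f0: "f 0 = 0"
    and a_def: "a = f' 0"
    and a_pos: "a > 0"
    and onesided: "\<And>x y. x \<ge> 0 \<Longrightarrow> y \<ge> 0 \<Longrightarrow> (y - x) * (f y - f x) \<le> a * (y - x)\<^sup>2"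
    and flow0: "\<And>x. x \<ge> 0 \<Longrightarrow> phi 0 x = x"
    and flow: "\<And>x t. x \<ge> 0 \<Longrightarrow> t \<ge> 0 \<Longrightarrow>
                 ((\<lambda>s. phi s x) has_real_derivative f (phi t x)) (at t within {0..})"
  shows "(\<forall>x\<in>Gdom f. (\<lambda>u. 1 / f u - 1 / (a * u)) absolutely_integrable_on {0..x})
       \<and> continuous_on (Gdom f) (Gfun f a)
       \<and> strict_mono_on (Gdom f) (Gfun f a)
       \<and> bij_betw (Gfun f a) (Gdom f) UNIV
       \<and> (\<forall>x>0. ((\<lambda>t. phi t (x * exp (- a * t))) \<longlongrightarrow>
                    inv_into (Gdom f) (Gfun f a) (ln x / a)) at_top)
       \<and> (\<forall>K. compact K \<and> K \<subseteq> {0<..} \<longrightarrow>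
            uniform_limit K (\<lambda>t x. phi t (x * exp (- a * t)))
              (\<lambda>x. inv_into (Gdom f) (Gfun f a) (ln x / a)) at_top)"
proof -
  interpret repelling_zero_flow f f' f'' a phi
    using d1 d2 bdd2 f0 a_def a_pos le_linear_if_one_sided_Lipschitz[OF onesided f0] flow0 flow
    by unfold_locales
  have "((\<lambda>t. phi t (x * exp (- a * t))) \<longlongrightarrow> Ginv (ln x / a)) at_top" if "x > 0" for x
    using uniform_limit_flow[of "{x}"] that by (auto intro: tendsto_uniform_limitI)
  then show ?thesis
    using integrand_absolutely_integrable continuous_on_Gfun strict_mono_on_Gfun bij_betw_Gfun
      uniform_limit_flow
    by blast
qed

end
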